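(* Let $T$ be a countable tree with root $o$, and let $Q$ be a stochastic matrix on $T$ with $q(x,y)>0$ iff $x=y^-$. Let $\lambda\in\mathbb{C}\setminus\{0\}$ and $n\ge1$. Every $\lambda$-polyharmonic function $f$ of order $n$ for $Q$ has an integral representation $$f(x)=\sum_{r=0}^{n-1}\int_{\partial T}K_Q^{(r)}(x,\xi\mid\lambda)\,d\sigma_r(\xi),\qquad x\in T,$$ where the complex distributions $\sigma_0,\dots,\sigma_{n-1}$ are uniquely determined by $f$. Conversely, every function with such a representation is $\lambda$-polyharmonic of order $n$ for $Q$.
   Context: $|x|=d(o,x)$. $x^-$ is the neighbour of $x\ne o$ closer to $o$. $\partial T$ is the set of ends of $T$, and $\partial T_x$ is the set of ends whose geodesic ray from $o$ passes through $x$. $Qf(x)=\sum_{y:\,y^-=x}q(x,y)f(y)$, required to converge absolutely. $f$ is $\lambda$-polyharmonic of order $n$ for $Q$ if $(\lambda I-Q)^nf=0$. $q^{(n)}(o,x)=\prod_{i=1}^n q(x_{i-1},x_i)$ for $\pi(o,x)=[o=x_0,\dots,x_n=x]$. $K_Q(x,\xi\mid\lambda)=\lambda^{|x|}/q^{(|x|)}(o,x)$ if $x$ lies on the ray from $o$ to $\xi$, and $0$ otherwise. $K_Q^{(r)}$ denotes the $r$-th derivative with respect to $\lambda$; for fixed $x$ it is a constant multiple of the indicator of $\partial T_x$. A complex distribution is $\sigma:\{\partial T_x\}\to\mathbb{C}$ with $\sigma(\partial T_x)=\sum_{y^-=x}\sigma(\partial T_y)$, absolutely convergent. The integral of $c\cdot\mathbf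 1_{\partial T_x}$ is $c\,\sigma(\partial T_x)$. *)

theory Defs
  imports "HOL-Analysis.Analysis"
begin

text \<open>Rooted tree on the vertex type 'a: par x is x^- (the neighbour of x closer to the root o),
  meaningful for x \<noteq> rt.\<close>

definition is_rooted_tree :: "('a \<Rightarrow> 'a) \<Rightarrow> 'a \<Rightarrow> bool" where
  "is_rooted_tree par rt \<longleftrightarrow> (\<forall>x. \<exists>k. (par ^^ k) x = rt)"

definition children :: "('a \<Rightarrow> 'a) \<Rightarrow> 'a \<Rightarrow> 'a \<Rightarrow> 'a set" where
  "children par rt x = {y. y \<noteq> rt \<and> par y = x}"

definition tdist :: "('a \<Rightarrow> 'a) \<Rightarrow> 'a \<Rightarrow> 'a \<Rightarrow> nat" where
  "tdist par rt x = (LEAST k. (par ^^ k) x = rt)"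

definition tree_stochastic :: "('a \<Rightarrow> 'a) \<Rightarrow> 'a \<Rightarrow> ('a \<Rightarrow> 'a \<Rightarrow> real) \<Rightarrow> bool" where
  "tree_stochastic par rt q \<longleftrightarrow>
     (\<forall>x y. q x y \<ge> 0) \<and> (\<forall>x. (q x has_sum 1) UNIV) \<and>
     (\<forall>x y. q x y > 0 \<longleftrightarrow> (y \<noteq> rt \<and> par y = x))"

definition Qdefined :: "('a \<Rightarrow> 'a) \<Rightarrow> 'a \<Rightarrow> ('a \<Rightarrow> 'a \<Rightarrow> real) \<Rightarrow> ('a \<Rightarrow> complex) \<Rightarrow> bool" where
  "Qdefined par rt q f \<longleftrightarrow> (\<forall>x. (\<lambda>y. norm (complex_of_real (q x y) * f y)) summable_on children par rt x)"

definition Qop :: "('a \<Rightarrow> 'a) \<Rightarrow> 'a \<Rightarrow> ('a \<Rightarrow> 'a \<Rightarrow> real) \<Rightarrow> ('a \<Rightarrow> complex) \<Rightarrow> 'a \<Rightarrow> complex" where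
  "Qop par rt q f x = (\<Sum>\<^sub>\<infinity>y\<in>children par rt x. complex_of_real (q x y) * f y)"

definition Lop :: "('a \<Rightarrow> 'a) \<Rightarrow> 'a \<Rightarrow> ('a \<Rightarrow> 'a \<Rightarrow> real) \<Rightarrow> complex \<Rightarrow> ('a \<Rightarrow> complex) \<Rightarrow> 'a \<Rightarrow> complex" where
  "Lop par rt q l f x = l * f x - Qop par rt q f x"

definition polyharmonic :: "('a \<Rightarrow> 'a) \<Rightarrow> 'a \<Rightarrow> ('a \<Rightarrow> 'a \<Rightarrow> real) \<Rightarrow> complex \<Rightarrow> nat \<Rightarrow> ('a \<Rightarrow> complex) \<Rightarrow> bool" where
  "polyharmonic par rt q l n f \<longleftrightarrow>
     (\<forall>k<n. Qdefined par rt q ((Lop par rt q l ^^ k) f)) \<and> (Lop par rt q l ^^ n) f = (\<lambda>_. 0)"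

text \<open>Ends of T, represented by geodesic rays starting at rt.\<close>
definition ends :: "('a \<Rightarrow> 'a) \<Rightarrow> 'a \<Rightarrow> (nat \<Rightarrow> 'a) set" where
  "ends par rt = {\<xi>. \<xi> 0 = rt \<and> (\<forall>m. \<xi> (Suc m) \<noteq> rt \<and> par (\<xi> (Suc m)) = \<xi> m)}"

definition bnd :: "('a \<Rightarrow> 'a) \<Rightarrow> 'a \<Rightarrow> 'a \<Rightarrow> (nat \<Rightarrow> 'a) set" where
  "bnd par rt x = {\<xi> \<in> ends par rt. \<xi> (tdist par rt x) = x}"

definition qpath :: "('a \<Rightarrow> 'a) \<Rightarrow> 'a \<Rightarrow> ('a \<Rightarrow> 'a \<Rightarrow> real) \<Rightarrow> 'a \<Rightarrow> real" where
  "qpath par rt q x = (\<Prod>i<tdist par rt x. q ((par ^^ Suc i) x) ((par ^^ i) x))"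

definition Kmartin :: "('a \<Rightarrow> 'a) \<Rightarrow> 'a \<Rightarrow> ('a \<Rightarrow> 'a \<Rightarrow> real) \<Rightarrow> 'a \<Rightarrow> (nat \<Rightarrow> 'a) \<Rightarrow> complex \<Rightarrow> complex" where
  "Kmartin par rt q x \<xi> l =
     (if \<xi> \<in> bnd par rt x then l ^ tdist par rt x / complex_of_real (qpath par rt q x) else 0)"

definition Kderiv :: "('a \<Rightarrow> 'a) \<Rightarrow> 'a \<Rightarrow> ('a \<Rightarrow> 'a \<Rightarrow> real) \<Rightarrow> nat \<Rightarrow> 'a \<Rightarrow> (nat \<Rightarrow> 'a) \<Rightarrow> complex \<Rightarrow> complex" where
  "Kderiv par rt q r x \<xi> l = (deriv ^^ r) (\<lambda>m. Kmartin par rt q x \<xi> m) l"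

text \<open>Complex distributions: set functions on the family {\<partial>T_x} that are absolutely
  convergently additive.\<close>
definition is_distribution :: "('a \<Rightarrow> 'a) \<Rightarrow> 'a \<Rightarrow> ((nat \<Rightarrow> 'a) set \<Rightarrow> complex) \<Rightarrow> bool" where
  "is_distribution par rt \<sigma> \<longleftrightarrow>
     (\<forall>x. (\<lambda>y. norm (\<sigma> (bnd par rt y))) summable_on children par rt x \<and>
          ((\<lambda>y. \<sigma> (bnd par rt y)) has_sum \<sigma> (bnd par rt x)) (children par rt x))"

text \<open>Integral of a function of the form c \<cdot> 1_{\<partial>T_x}: it equals c \<sigma>(\<partial>T_x).\<close>
definition dint :: "('a \<Rightarrow> 'a) \<Rightarrow> 'a \<Rightarrow> ((nat \<Rightarrow> 'a) set \<Rightarrow> complex) \<Rightarrow> ((nat \<Rightarrow> 'a) \<Rightarrow> complex) \<Rightarrow> complex" where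
  "dint par rt \<sigma> \<phi> = (SOME v. \<exists>c x. \<phi> = (\<lambda>\<xi>. c * indicator (bnd par rt x) \<xi>) \<and> v = c * \<sigma> (bnd par rt x))"

definition represents :: "('a \<Rightarrow> 'a) \<Rightarrow> 'a \<Rightarrow> ('a \<Rightarrow> 'a \<Rightarrow> real) \<Rightarrow> complex \<Rightarrow> nat \<Rightarrow>
    (nat \<Rightarrow> (nat \<Rightarrow> 'a) set \<Rightarrow> complex) \<Rightarrow> ('a \<Rightarrow> complex) \<Rightarrow> bool" where
  "represents par rt q l n \<sigma> f \<longleftrightarrow>
     (\<forall>r<n. is_distribution par rt (\<sigma> r)) \<and>
     (\<forall>x. f x = (\<Sum>r<n. dint par rt (\<sigma> r) (\<lambda>\<xi>. Kderiv par rt q r x \<xi> l)))"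

end

theory Submission
  imports Defs
begin

(* For \<xi> in \<partial>T_x the kernel K_Q^(r)(x,\<xi>|\<lambda>) is the constant
   a_r(x) = |x|(|x|-1)...(|x|-r+1) \<lambda>^(|x|-r) / q^(|x|)(o,x), so a representation of f
   reads f(x) = \<Sum>_r a_r(x) s_r(x) with s_r(x) = \<sigma>_r(\<partial>T_x), and the complex distributions
   are the vertex functions s with s(x) = \<Sum>_{y^- = x} s(y).  For a child y of x one has
   q(x,y) a_r(y) = \<lambda> a_r(x) + r a_(r-1)(x), so \<lambda>I - Q turns a representation of order n+1
   into one of order n, replacing s_r by -(r+1) s_(r+1).  Induction on n gives the converse
   and, as a_0 never vanishes, uniqueness.  For existence, shifting a representation of
   (\<lambda>I - Q) f back yields g with (\<lambda>I - Q) g = (\<lambda>I - Q) f, and the eigenfunction h = f - g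
   is represented by \<sigma>_0(\<partial>T_x) = h(x) q^(|x|)(o,x) / \<lambda>^|x|. *)

definition falling_fact :: "nat \<Rightarrow> nat \<Rightarrow> nat" where
  "falling_fact d r = (\<Prod>i<r. d - i)"

lemma falling_fact_0 [simp]: "falling_fact d 0 = 1"
  by (simp add: falling_fact_def)

lemma falling_fact_Suc: "falling_fact d (Suc r) = falling_fact d r * (d - r)"
  by (simp add: falling_fact_def)

lemma falling_fact_eq_0: "d < r \<Longrightarrow> falling_fact d r = 0"
  unfolding falling_fact_def by (rule prod_zero) auto

lemma falling_fact_Suc_Suc:
  "falling_fact (Suc d) (Suc r) = falling_fact d (Suc r) + Suc r * falling_fact d r"
proof -
  have shift: "falling_fact (Suc d) (Suc r) = Suc d * falling_fact d r"
    unfolding falling_fact_def by (simp add: prod.lessThan_Suc_shift del: prod.lessThan_Suc)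
  show ?thesis
  proof (cases "r \<le> d")
    case True
    then show ?thesis by (subst shift, subst falling_fact_Suc) (simp add: algebra_simps)
  next
    case False
    then show ?thesis by (simp add: shift falling_fact_Suc falling_fact_eq_0)
  qed
qed

lemma higher_deriv_monomial:
  "(deriv ^^ r) (\<lambda>z::complex. c * z ^ d) = (\<lambda>z. c * of_nat (falling_fact d r) * z ^ (d - r))"
proof (induction r)
  case 0
  then show ?case by simp
next
  case (Suc r)
  have "deriv (\<lambda>z. c * of_nat (falling_fact d r) * z ^ (d - r)) z =
      c * of_nat (falling_fact d (Suc r)) * z ^ (d - Suc r)" for z
  proof -
    have "((\<lambda>z. c * of_nat (falling_fact d r) * z ^ (d - r)) has_field_derivative
        c * of_nat (falling_fact d r) * (of_nat (d - r) * (1 * z ^ (d - r - Suc 0)))) (at z)"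
      by (intro DERIV_cmult DERIV_power DERIV_ident)
    then show ?thesis by (simp add: DERIV_imp_deriv falling_fact_Suc)
  qed
  then show ?case using Suc by auto
qed

text \<open>The Leibniz rule for the \<open>r\<close>-th derivative of \<open>z * z ^ d\<close>.\<close>

lemma falling_fact_power_Suc:
  fixes z :: "'b::comm_ring_1"
  shows "of_nat (falling_fact (Suc d) r) * z ^ (Suc d - r) =
    z * (of_nat (falling_fact d r) * z ^ (d - r))
    + of_nat r * (of_nat (falling_fact d (r - 1)) * z ^ (d - (r - 1)))"
proof (cases r)
  case 0
  then show ?thesis by simp
next
  case (Suc r')
  have "of_nat (falling_fact d (Suc r')) * z ^ (d - r') =
      z * (of_nat (falling_fact d (Suc r')) * z ^ (d - Suc r'))"
  proof (cases "r' < d")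
    case True
    then have "d - r' = Suc (d - Suc r')" by simp
    then show ?thesis by (simp add: algebra_simps)
  next
    case False
    then show ?thesis by (simp add: falling_fact_eq_0)
  qed
  then show ?thesis by (simp add: Suc falling_fact_Suc_Suc algebra_simps)
qed

lemma cmult_indicator_eq:
  fixes c c' :: "'b::ring_1"
  assumes "a \<in> A" "b \<in> B" and eq: "(\<lambda>x. c * indicator A x) = (\<lambda>x. c' * indicator B x)"
  shows "c = c' \<and> (c = 0 \<or> A = B)"
proof -
  have pt: "c * indicator A x = c' * indicator B x" for x
    using eq by metis
  have "c = c'"
    using pt[of a] pt[of b] assms(1,2) by (cases "a \<in> B") auto
  moreover have "x \<in> A \<longleftrightarrow> x \<in> B" if "c \<noteq> 0" for x
    using pt[of x] \<open>c = c'\<close> that by (cases "x \<in> A"; cases "x \<in> B") auto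
  ultimately show ?thesis
    by blast
qed

locale rooted_tree =
  fixes par :: "'a \<Rightarrow> 'a" and rt :: 'a
  assumes rooted: "is_rooted_tree par rt"
begin

abbreviation "ch \<equiv> children par rt"
abbreviation "depth \<equiv> tdist par rt"
abbreviation "bd \<equiv> bnd par rt"

lemma funpow_depth: "(par ^^ depth x) x = rt"
  using rooted unfolding is_rooted_tree_def tdist_def by (meson LeastI_ex)

lemma funpow_less_depth: "k < depth x \<Longrightarrow> (par ^^ k) x \<noteq> rt"
  unfolding tdist_def using not_less_Least by blast

lemma depth_le: "(par ^^ k) x = rt \<Longrightarrow> depth x \<le> k"
  unfolding tdist_def by (rule Least_le)

lemma mem_children_iff: "y \<in> ch x \<longleftrightarrow> y \<noteq> rt \<and> par y = x"
  by (simp add: children_def)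

lemma depth_child:
  assumes "y \<in> ch x"
  shows "depth y = Suc (depth x)"
proof -
  have y: "y \<noteq> rt" "par y = x"
    using assms mem_children_iff by auto
  then obtain m where m: "depth y = Suc m"
    using funpow_depth[of y] by (metis funpow_0 not0_implies_Suc)
  then have "(par ^^ m) x = rt"
    using funpow_depth[of y] y by (simp only: funpow_Suc_right o_apply)
  moreover have "(par ^^ Suc (depth x)) y = rt"
    using funpow_depth[of x] y by (simp only: funpow_Suc_right o_apply)
  ultimately show ?thesis
    using m depth_le by (metis le_antisym not_less_eq_eq)
qed

lemma funpow_par_end:
  assumes "\<xi> \<in> ends par rt"
  shows "(par ^^ k) (\<xi> (i + k)) = \<xi> i"
proof (induction k)
  case (Suc k)
  have "par (\<xi> (Suc (i + k))) = \<xi> (i + k)"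
    using assms by (simp add: ends_def)
  with Suc show ?case
    by (simp add: funpow_Suc_right del: funpow.simps)
qed simp

lemma depth_end:
  assumes "\<xi> \<in> ends par rt"
  shows "depth (\<xi> m) = m"
  unfolding tdist_def
proof (rule Least_equality)
  show "(par ^^ m) (\<xi> m) = rt"
    using funpow_par_end[OF assms, of m 0] assms by (simp add: ends_def)
  show "m \<le> k" if "(par ^^ k) (\<xi> m) = rt" for k
  proof (rule ccontr)
    assume "\<not> m \<le> k"
    then have "(par ^^ k) (\<xi> m) = \<xi> (Suc (m - k - 1))"
      using funpow_par_end[OF assms, of k "Suc (m - k - 1)"] by simp
    with that have "\<xi> (Suc (m - k - 1)) = rt"
      by simp
    with assms show False
      by (simp add: ends_def)
  qed
qed

lemma nth_mem_bnd:
  assumes "\<eta> \<in> bd y" "i \<le> depth y"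
  shows "\<eta> i = (par ^^ (depth y - i)) y"
  using assms funpow_par_end[of \<eta> "depth y - i" i] by (simp add: bnd_def)

lemma mem_bnd_child:
  assumes "y \<in> ch x" "\<eta> \<in> ends par rt" "\<eta> (Suc (depth x)) = y"
  shows "\<eta> \<in> bd x"
  using assms by (auto simp: bnd_def ends_def mem_children_iff)

definition vertex_distribution :: "('a \<Rightarrow> complex) \<Rightarrow> bool" where
  "vertex_distribution s \<longleftrightarrow> (\<forall>x. (\<lambda>y. norm (s y)) summable_on ch x \<and> (s has_sum s x) (ch x))"

lemma is_distribution_iff: "is_distribution par rt \<sigma> \<longleftrightarrow> vertex_distribution (\<lambda>x. \<sigma> (bd x))"
  unfolding is_distribution_def vertex_distribution_def by simp

lemma vertex_distribution_zero: "vertex_distribution (\<lambda>_. 0)"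
  unfolding vertex_distribution_def by simp

lemma vertex_distribution_cmult: "vertex_distribution s \<Longrightarrow> vertex_distribution (\<lambda>x. c * s x)"
  unfolding vertex_distribution_def
  by (auto simp: norm_mult intro: summable_on_cmult_right has_sum_cmult_right)

lemma vertex_distribution_add:
  assumes "vertex_distribution s" "vertex_distribution t"
  shows "vertex_distribution (\<lambda>x. s x + t x)"
  unfolding vertex_distribution_def
proof (intro allI conjI)
  fix x
  show "(\<lambda>y. norm (s y + t y)) summable_on ch x"
  proof (rule Infinite_Sum.abs_summable_on_comparison_test')
    show "(\<lambda>y. norm (s y) + norm (t y)) summable_on ch x"
      using assms unfolding vertex_distribution_def by (intro summable_on_add) auto
  qed (rule norm_triangle_ineq)
  show "((\<lambda>x. s x + t x) has_sum s x + t x) (ch x)"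
    using assms unfolding vertex_distribution_def by (intro has_sum_add) auto
qed

lemma vertex_distribution_diff:
  "vertex_distribution s \<Longrightarrow> vertex_distribution t \<Longrightarrow> vertex_distribution (\<lambda>x. s x - t x)"
  using vertex_distribution_add[OF _ vertex_distribution_cmult[of t "-1"]] by simp

lemma vertex_distribution_sum:
  assumes "finite I" "\<And>i. i \<in> I \<Longrightarrow> vertex_distribution (s i)"
  shows "vertex_distribution (\<lambda>x. \<Sum>i\<in>I. c i * s i x)"
  using assms
proof (induction I rule: finite_induct)
  case (insert i I)
  then have "vertex_distribution (\<lambda>x. c i * s i x + (\<Sum>i\<in>I. c i * s i x))"
    by (intro vertex_distribution_add vertex_distribution_cmult) auto
  with insert show ?case
    by simp
qed (simp add: vertex_distribution_zero)

end

locale leafless_tree = rooted_tree +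
  assumes children_nonempty: "ch x \<noteq> {}"
begin

lemma bnd_nonempty: "bd x \<noteq> {}"
proof -
  have "\<forall>v. \<exists>y. y \<in> ch v"
    using children_nonempty by blast
  then obtain nxt where nxt: "\<And>v. nxt v \<in> ch v"
    by metis
  define d where "d = depth x"
  define \<xi> where "\<xi> i = (if i \<le> d then (par ^^ (d - i)) x else (nxt ^^ (i - d)) x)" for i
  have "\<xi> (Suc m) \<noteq> rt \<and> par (\<xi> (Suc m)) = \<xi> m" for m
  proof (cases "Suc m \<le> d")
    case True
    then have "(par ^^ (d - Suc m)) x \<noteq> rt"
      using funpow_less_depth d_def by simp
    moreover have "par ((par ^^ (d - Suc m)) x) = (par ^^ (d - m)) x"
      using True by (metis Suc_diff_Suc Suc_le_lessD comp_apply funpow.simps(2))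
    ultimately show ?thesis
      using True unfolding \<xi>_def by simp
  next
    case False
    then have "\<xi> (Suc m) = nxt (\<xi> m)"
      unfolding \<xi>_def by (simp add: Suc_diff_le)
    then show ?thesis
      using nxt[of "\<xi> m"] by (simp add: mem_children_iff)
  qed
  moreover have "\<xi> 0 = rt"
    unfolding \<xi>_def d_def using funpow_depth by simp
  ultimately have "\<xi> \<in> ends par rt"
    unfolding ends_def by auto
  moreover have "\<xi> d = x"
    unfolding \<xi>_def by simp
  ultimately show ?thesis
    unfolding bnd_def d_def by auto
qed

lemma bnd_eq_UN_children: "bd x = (\<Union>z\<in>ch x. bd z)"
proof (intro equalityI subsetI)
  fix \<eta> assume "\<eta> \<in> bd x"
  then have "\<eta> (Suc (depth x)) \<in> ch x" "\<eta> \<in> bd (\<eta> (Suc (depth x)))"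
    by (auto simp: bnd_def ends_def mem_children_iff depth_end)
  then show "\<eta> \<in> (\<Union>z\<in>ch x. bd z)"
    by blast
next
  fix \<eta> assume "\<eta> \<in> (\<Union>z\<in>ch x. bd z)"
  then obtain z where "z \<in> ch x" "\<eta> \<in> bd z"
    by blast
  then show "\<eta> \<in> bd x"
    using mem_bnd_child depth_child by (auto simp: bnd_def)
qed

lemma bnd_eq_imp_single_child:
  assumes eq: "bd x = bd y" and lt: "depth x < depth y"
  obtains c where "ch x = {c}" "bd c = bd y" "depth c = Suc (depth x)"
proof -
  define c where "c = (par ^^ (depth y - Suc (depth x))) y"
  have "z = c" if "z \<in> ch x" for z
  proof -
    obtain \<eta> where "\<eta> \<in> bd z"
      using bnd_nonempty by blast
    with that have "\<eta> \<in> bd y" "\<eta> (Suc (depth x)) = z"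
      using eq bnd_eq_UN_children[of x] depth_child by (auto simp: bnd_def)
    then show ?thesis
      using nth_mem_bnd[of \<eta> y "Suc (depth x)"] lt c_def by simp
  qed
  then have "ch x = {c}"
    using children_nonempty[of x] by blast
  moreover from this have "bd c = bd y" "depth c = Suc (depth x)"
    using eq bnd_eq_UN_children[of x] depth_child by auto
  ultimately show ?thesis
    using that by blast
qed

lemma vertex_distribution_single_child:
  assumes "vertex_distribution s" "ch x = {c}"
  shows "s x = s c"
proof -
  have "(s has_sum s x) {c}"
    using assms unfolding vertex_distribution_def by metis
  then show ?thesis
    using has_sum_finite[of "{c}" s] has_sum_unique by auto
qed

lemma vertex_distribution_bnd_eq:
  assumes "vertex_distribution s" "bd x = bd y"
  shows "s x = s y"
proof -
  have "s x = s y" if "bd x = bd y" "depth x \<le> depth y" for x y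
    using that
  proof (induction "depth y - depth x" arbitrary: x)
    case 0
    obtain \<xi> where "\<xi> \<in> bd x"
      using bnd_nonempty by blast
    with 0 have "x = y"
      by (auto simp: bnd_def)
    then show ?case
      by simp
  next
    case (Suc k)
    then have "depth x < depth y"
      by simp
    with Suc.prems obtain c where "ch x = {c}" "bd c = bd y" "depth c = Suc (depth x)"
      using bnd_eq_imp_single_child by blast
    with Suc have "s c = s y"
      by simp
    with \<open>ch x = {c}\<close> show ?case
      using vertex_distribution_single_child[OF assms(1)] by simp
  qed
  from this[of x y] this[of y x] assms(2) show ?thesis
    by (cases "depth x \<le> depth y") auto
qed

lemma dint_indicator: "dint par rt \<sigma> (\<lambda>\<xi>. c * indicator (bd x) \<xi>) = c * \<sigma> (bd x)"
  unfolding dint_def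
proof (rule some_equality)
  fix v
  assume "\<exists>c' x'. (\<lambda>\<xi>. c * indicator (bd x) \<xi>) = (\<lambda>\<xi>. c' * indicator (bd x') \<xi>)
    \<and> v = c' * \<sigma> (bd x')"
  then obtain c' x' where eq: "(\<lambda>\<xi>. c * indicator (bd x) \<xi>) = (\<lambda>\<xi>. c' * indicator (bd x') \<xi>)"
    and v: "v = c' * \<sigma> (bd x')"
    by blast
  obtain \<xi> \<xi>' where "\<xi> \<in> bd x" "\<xi>' \<in> bd x'"
    using bnd_nonempty by blast
  then have "c = c' \<and> (c = 0 \<or> bd x = bd x')"
    using eq by (rule cmult_indicator_eq)
  with v show "v = c * \<sigma> (bd x)"
    by auto
qed blast

end

lemma Qdefined_has_sum:
  "Qdefined par rt q f \<Longrightarrow>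
    ((\<lambda>y. complex_of_real (q x y) * f y) has_sum Qop par rt q f x) (children par rt x)"
  unfolding Qdefined_def Qop_def by (rule has_sum_infsum, rule abs_summable_summable) blast

lemma Qdefined_diff:
  assumes "Qdefined par rt q f" "Qdefined par rt q g"
  shows "Qdefined par rt q (\<lambda>x. f x - g x)"
  unfolding Qdefined_def
proof
  fix x
  show "(\<lambda>y. norm (complex_of_real (q x y) * (f y - g y))) summable_on children par rt x"
  proof (rule Infinite_Sum.abs_summable_on_comparison_test')
    show "(\<lambda>y. norm (complex_of_real (q x y) * f y) + norm (complex_of_real (q x y) * g y))
        summable_on children par rt x"
      using assms unfolding Qdefined_def by (intro summable_on_add) auto
  qed (simp add: right_diff_distrib norm_triangle_ineq4)
qed

lemma Lop_diff:
  assumes "Qdefined par rt q f" "Qdefined par rt q g"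
  shows "Lop par rt q l (\<lambda>x. f x - g x) x = Lop par rt q l f x - Lop par rt q l g x"
proof -
  have "((\<lambda>y. complex_of_real (q x y) * f y + (-1) * (complex_of_real (q x y) * g y)) has_sum
      Qop par rt q f x + (-1) * Qop par rt q g x) (children par rt x)"
    using assms by (intro has_sum_add has_sum_cmult_right Qdefined_has_sum)
  then have "Qop par rt q (\<lambda>x. f x - g x) x = Qop par rt q f x - Qop par rt q g x"
    unfolding Qop_def[of _ _ _ "\<lambda>x. f x - g x"] by (intro infsumI) (simp add: algebra_simps)
  then show ?thesis
    unfolding Lop_def by (simp add: algebra_simps)
qed

lemma Lop_zero: "Lop par rt q l (\<lambda>_. 0) = (\<lambda>_. 0)"
  unfolding Lop_def Qop_def by simp

lemma polyharmonic_Suc: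
  "polyharmonic par rt q l (Suc n) f \<longleftrightarrow>
    Qdefined par rt q f \<and> polyharmonic par rt q l n (Lop par rt q l f)"
  unfolding polyharmonic_def All_less_Suc2 by (simp add: funpow_Suc_right del: funpow.simps)

locale stochastic_tree = rooted_tree +
  fixes q :: "'a \<Rightarrow> 'a \<Rightarrow> real"
  assumes stochastic: "tree_stochastic par rt q"
begin

lemma q_pos_iff: "q x y > 0 \<longleftrightarrow> y \<in> ch x"
  using stochastic unfolding tree_stochastic_def mem_children_iff by auto

sublocale leafless_tree par rt
proof
  fix x
  show "ch x \<noteq> {}"
  proof
    assume "ch x = {}"
    have "q x y = 0" for y
    proof -
      have "q x y \<ge> 0"
        using stochastic by (simp add: tree_stochastic_def)
      moreover have "\<not> q x y > 0"
        using q_pos_iff \<open>ch x = {}\<close> by simp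
      ultimately show ?thesis
        by simp
    qed
    then have "(q x has_sum 0) UNIV"
      by (rule has_sum_0)
    moreover have "(q x has_sum 1) UNIV"
      using stochastic by (simp add: tree_stochastic_def)
    ultimately show False
      using has_sum_unique zero_neq_one by metis
  qed
qed

lemma qpath_child:
  assumes "y \<in> ch x"
  shows "qpath par rt q y = q x y * qpath par rt q x"
proof -
  have "par y = x"
    using assms mem_children_iff by auto
  moreover from this have "(par ^^ Suc k) y = (par ^^ k) x" for k
    by (simp add: funpow_Suc_right del: funpow.simps)
  ultimately show ?thesis
    unfolding qpath_def depth_child[OF assms] by (subst prod.lessThan_Suc_shift) simp
qed

lemma qpath_pos: "qpath par rt q x > 0"
  unfolding qpath_def
proof (rule prod_pos)
  fix i assume "i \<in> {..<depth x}"
  then have "(par ^^ i) x \<in> ch ((par ^^ Suc i) x)"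
    using funpow_less_depth by (simp add: mem_children_iff)
  then show "0 < q ((par ^^ Suc i) x) ((par ^^ i) x)"
    using q_pos_iff by blast
qed

definition kernel_coeff :: "complex \<Rightarrow> nat \<Rightarrow> 'a \<Rightarrow> complex" where
  "kernel_coeff l r x =
    of_nat (falling_fact (depth x) r) * l ^ (depth x - r) / complex_of_real (qpath par rt q x)"

lemma Kderiv_eq: "Kderiv par rt q r x \<xi> l = kernel_coeff l r x * indicator (bd x) \<xi>"
proof -
  define c where "c = indicator (bd x) \<xi> / complex_of_real (qpath par rt q x)"
  have "(\<lambda>m. Kmartin par rt q x \<xi> m) = (\<lambda>m. c * m ^ depth x)"
    unfolding Kmartin_def c_def by (auto simp: indicator_def)
  then have "Kderiv par rt q r x \<xi> l = c * of_nat (falling_fact (depth x) r) * l ^ (depth x - r)"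
    by (simp only: Kderiv_def higher_deriv_monomial)
  then show ?thesis
    unfolding kernel_coeff_def c_def by simp
qed

lemma dint_Kderiv: "dint par rt \<sigma> (\<lambda>\<xi>. Kderiv par rt q r x \<xi> l) = kernel_coeff l r x * \<sigma> (bd x)"
  unfolding Kderiv_eq by (rule dint_indicator)

lemma kernel_coeff_child:
  assumes "y \<in> ch x"
  shows "complex_of_real (q x y) * kernel_coeff l r y =
    l * kernel_coeff l r x + of_nat r * kernel_coeff l (r - 1) x"
proof -
  define d where "d = depth x"
  have "complex_of_real (q x y) \<noteq> 0"
    using q_pos_iff[of x y] assms by simp
  then have "complex_of_real (q x y) * kernel_coeff l r y =
      of_nat (falling_fact (Suc d) r) * l ^ (Suc d - r) / complex_of_real (qpath par rt q x)"
    unfolding kernel_coeff_def depth_child[OF assms] qpath_child[OF assms] d_def by simp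
  also have "\<dots> = (l * (of_nat (falling_fact d r) * l ^ (d - r))
      + of_nat r * (of_nat (falling_fact d (r - 1)) * l ^ (d - (r - 1))))
      / complex_of_real (qpath par rt q x)"
    by (simp only: falling_fact_power_Suc)
  also have "\<dots> = l * kernel_coeff l r x + of_nat r * kernel_coeff l (r - 1) x"
    unfolding kernel_coeff_def d_def by (simp add: add_divide_distrib)
  finally show ?thesis .
qed

lemma kernel_coeff_0_nonzero: "l \<noteq> 0 \<Longrightarrow> kernel_coeff l 0 x \<noteq> 0"
  unfolding kernel_coeff_def using qpath_pos[of x] by simp

definition kernel_repr :: "complex \<Rightarrow> nat \<Rightarrow> (nat \<Rightarrow> 'a \<Rightarrow> complex) \<Rightarrow> ('a \<Rightarrow> complex) \<Rightarrow> bool" where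
  "kernel_repr l n s f \<longleftrightarrow>
    (\<forall>r<n. vertex_distribution (s r)) \<and> (\<forall>x. f x = (\<Sum>r<n. kernel_coeff l r x * s r x))"

lemma represents_imp_kernel_repr:
  "represents par rt q l n \<sigma> f \<Longrightarrow> kernel_repr l n (\<lambda>r x. \<sigma> r (bd x)) f"
  unfolding represents_def kernel_repr_def is_distribution_iff dint_Kderiv by simp

text \<open>Distinct vertices may have the same set of ends \<open>\<partial>T\<^sub>x\<close>; by
  \<open>vertex_distribution_bnd_eq\<close> the choice of \<open>x\<close> below does not matter.\<close>

lemma kernel_repr_imp_represents:
  assumes "kernel_repr l n s f"
  shows "represents par rt q l n (\<lambda>r S. s r (SOME x. S = bd x)) f"
proof -
  have "s r (SOME x. bd y = bd x) = s r y" if "r < n" for r y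
  proof (rule vertex_distribution_bnd_eq)
    show "vertex_distribution (s r)"
      using assms that by (simp add: kernel_repr_def)
    have "bd y = bd (SOME x. bd y = bd x)"
      by (rule someI[of _ y]) simp
    then show "bd (SOME x. bd y = bd x) = bd y"
      by simp
  qed
  with assms show ?thesis
    unfolding represents_def kernel_repr_def is_distribution_iff dint_Kderiv by simp
qed

lemma kernel_repr_add:
  "kernel_repr l n s f \<Longrightarrow> kernel_repr l n t g \<Longrightarrow>
    kernel_repr l n (\<lambda>r x. s r x + t r x) (\<lambda>x. f x + g x)"
  unfolding kernel_repr_def by (auto simp: vertex_distribution_add sum.distrib algebra_simps)

lemma kernel_repr_diff:
  "kernel_repr l n s f \<Longrightarrow> kernel_repr l n t g \<Longrightarrow>
    kernel_repr l n (\<lambda>r x. s r x - t r x) (\<lambda>x. f x - g x)"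
  unfolding kernel_repr_def by (auto simp: vertex_distribution_diff sum_subtractf algebra_simps)

lemma has_sum_Q_kernel_repr:
  fixes x :: 'a
  assumes "kernel_repr l (Suc n) s f"
  defines "b r \<equiv> l * kernel_coeff l r x + of_nat r * kernel_coeff l (r - 1) x"
  shows "(\<lambda>y. norm (complex_of_real (q x y) * f y)) summable_on ch x"
    and "((\<lambda>y. complex_of_real (q x y) * f y) has_sum (\<Sum>r<Suc n. b r * s r x)) (ch x)"
proof -
  have "vertex_distribution (\<lambda>y. \<Sum>r<Suc n. b r * s r y)"
    using assms by (intro vertex_distribution_sum) (auto simp: kernel_repr_def)
  then have summable: "(\<lambda>y. norm (\<Sum>r<Suc n. b r * s r y)) summable_on ch x"
    and has_sum: "((\<lambda>y. \<Sum>r<Suc n. b r * s r y) has_sum (\<Sum>r<Suc n. b r * s r x)) (ch x)"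
    by (auto simp: vertex_distribution_def)
  have eq: "complex_of_real (q x y) * f y = (\<Sum>r<Suc n. b r * s r y)" if "y \<in> ch x" for y
  proof -
    have "f y = (\<Sum>r<Suc n. kernel_coeff l r y * s r y)"
      using assms(1) by (simp only: kernel_repr_def)
    then have "complex_of_real (q x y) * f y =
        (\<Sum>r<Suc n. (complex_of_real (q x y) * kernel_coeff l r y) * s r y)"
      by (simp only: sum_distrib_left mult.assoc)
    then show ?thesis
      unfolding kernel_coeff_child[OF that] b_def .
  qed
  show "(\<lambda>y. norm (complex_of_real (q x y) * f y)) summable_on ch x"
    using summable
    by (subst summable_on_cong[where g = "\<lambda>y. norm (\<Sum>r<Suc n. b r * s r y)"]) (simp_all add: eq)
  show "((\<lambda>y. complex_of_real (q x y) * f y) has_sum (\<Sum>r<Suc n. b r * s r x)) (ch x)"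
    using has_sum
    by (subst has_sum_cong[where g = "\<lambda>y. \<Sum>r<Suc n. b r * s r y"]) (simp_all add: eq)
qed

lemma kernel_repr_Suc:
  assumes "kernel_repr l (Suc n) s f"
  shows "Qdefined par rt q f"
    and "kernel_repr l n (\<lambda>r x. - of_nat (Suc r) * s (Suc r) x) (Lop par rt q l f)"
proof -
  show "Qdefined par rt q f"
    unfolding Qdefined_def using has_sum_Q_kernel_repr(1)[OF assms] by blast
  have "Lop par rt q l f x = (\<Sum>r<n. kernel_coeff l r x * (- of_nat (Suc r) * s (Suc r) x))" for x
  proof -
    have "Qop par rt q f x =
        (\<Sum>r<Suc n. (l * kernel_coeff l r x + of_nat r * kernel_coeff l (r - 1) x) * s r x)"
      unfolding Qop_def using has_sum_Q_kernel_repr(2)[OF assms] by (rule infsumI)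
    moreover have "l * f x = (\<Sum>r<Suc n. l * kernel_coeff l r x * s r x)"
      using assms unfolding kernel_repr_def by (simp only: sum_distrib_left mult.assoc)
    ultimately have "Lop par rt q l f x =
        (\<Sum>r<Suc n. - (of_nat r * kernel_coeff l (r - 1) x * s r x))"
      unfolding Lop_def by (simp only: sum_subtractf[symmetric]) (simp add: algebra_simps)
    also have "\<dots> = (\<Sum>r<n. kernel_coeff l r x * (- of_nat (Suc r) * s (Suc r) x))"
      by (subst sum.lessThan_Suc_shift) (simp add: algebra_simps)
    finally show ?thesis .
  qed
  with assms show "kernel_repr l n (\<lambda>r x. - of_nat (Suc r) * s (Suc r) x) (Lop par rt q l f)"
    by (simp add: kernel_repr_def vertex_distribution_cmult)
qed

lemma kernel_repr_polyharmonic: "kernel_repr l n s f \<Longrightarrow> polyharmonic par rt q l n f"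
proof (induction n arbitrary: s f)
  case 0
  then show ?case
    by (simp add: kernel_repr_def polyharmonic_def fun_eq_iff)
next
  case (Suc n)
  then show ?case
    using kernel_repr_Suc[OF Suc.prems] by (simp add: polyharmonic_Suc)
qed

lemma kernel_repr_zero:
  assumes "l \<noteq> 0" "kernel_repr l n s (\<lambda>_. 0)" "r < n"
  shows "s r x = 0"
  using assms(2,3)
proof (induction n arbitrary: s r x)
  case 0
  then show ?case
    by simp
next
  case (Suc n)
  have "kernel_repr l n (\<lambda>r x. - of_nat (Suc r) * s (Suc r) x) (\<lambda>_. 0)"
    using kernel_repr_Suc(2)[OF Suc.prems(1)] by (simp add: Lop_zero)
  from Suc.IH[OF this] have higher: "s (Suc r') x' = 0" if "r' < n" for r' x'
    using that by (simp del: of_nat_Suc)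
  show ?case
  proof (cases r)
    case 0
    have "0 = (\<Sum>r<Suc n. kernel_coeff l r x * s r x)"
      using Suc.prems(1) unfolding kernel_repr_def by metis
    also have "\<dots> = kernel_coeff l 0 x * s 0 x"
      by (subst sum.lessThan_Suc_shift) (simp add: higher)
    finally show ?thesis
      using 0 kernel_coeff_0_nonzero[OF assms(1)] by simp
  next
    case (Suc r')
    then show ?thesis
      using higher Suc.prems(2) by simp
  qed
qed

lemma kernel_repr_unique:
  assumes "l \<noteq> 0" "kernel_repr l n s f" "kernel_repr l n s' f" "r < n"
  shows "s r x = s' r x"
proof -
  have "kernel_repr l n (\<lambda>r x. s r x - s' r x) (\<lambda>_. 0)"
    using kernel_repr_diff[OF assms(2,3)] by simp
  from kernel_repr_zero[OF assms(1) this assms(4)] show ?thesis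
    by simp
qed

lemma eigenfunction_vertex_distribution:
  assumes "l \<noteq> 0" "Qdefined par rt q h" "Lop par rt q l h = (\<lambda>_. 0)"
  shows "vertex_distribution (\<lambda>x. h x * complex_of_real (qpath par rt q x) / l ^ depth x)"
    (is "vertex_distribution ?s")
  unfolding vertex_distribution_def
proof (intro allI conjI)
  fix x
  define c where "c = complex_of_real (qpath par rt q x) / l ^ Suc (depth x)"
  have eq: "?s y = c * (complex_of_real (q x y) * h y)" if "y \<in> ch x" for y
    unfolding c_def depth_child[OF that] qpath_child[OF that] by (simp add: field_simps)
  have "(\<lambda>y. norm (c * (complex_of_real (q x y) * h y))) summable_on ch x"
    using assms(2) unfolding Qdefined_def norm_mult[of c] by (intro summable_on_cmult_right) auto
  then show "(\<lambda>y. norm (?s y)) summable_on ch x"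
    by (subst summable_on_cong[where g = "\<lambda>y. norm (c * (complex_of_real (q x y) * h y))"])
      (simp_all add: eq)
  have "Qop par rt q h x = l * h x"
    using fun_cong[OF assms(3), of x] unfolding Lop_def by simp
  then have "((\<lambda>y. c * (complex_of_real (q x y) * h y)) has_sum c * (l * h x)) (ch x)"
    using Qdefined_has_sum[OF assms(2), of x] by (intro has_sum_cmult_right) simp
  moreover have "c * (l * h x) = ?s x"
    unfolding c_def using assms(1) by (simp add: field_simps)
  ultimately show "(?s has_sum ?s x) (ch x)"
    by (subst has_sum_cong[where g = "\<lambda>y. c * (complex_of_real (q x y) * h y)"]) (simp_all add: eq)
qed

lemma eigenfunction_kernel_repr:
  assumes "l \<noteq> 0" "Qdefined par rt q h" "Lop par rt q l h = (\<lambda>_. 0)"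
  shows "\<exists>s. kernel_repr l (Suc n) s h"
proof
  define s0 where "s0 x = h x * complex_of_real (qpath par rt q x) / l ^ depth x" for x
  have "h x = (\<Sum>r<Suc n. kernel_coeff l r x * (if r = 0 then s0 else (\<lambda>_. 0)) x)" for x
    using assms(1) qpath_pos[of x]
    by (subst sum.lessThan_Suc_shift) (simp add: kernel_coeff_def s0_def)
  then show "kernel_repr l (Suc n) (\<lambda>r. if r = 0 then s0 else (\<lambda>_. 0)) h"
    unfolding kernel_repr_def s0_def
    using eigenfunction_vertex_distribution[OF assms] vertex_distribution_zero by auto
qed

lemma kernel_repr_Lop_preimage:
  assumes "kernel_repr l n t g"
  obtains s f where "kernel_repr l (Suc n) s f" "Qdefined par rt q f" "Lop par rt q l f = g"
proof -
  define s where "s r = (if r = 0 then (\<lambda>_. 0) else (\<lambda>x. - t (r - 1) x / of_nat r))" for r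
  define f where "f x = (\<Sum>r<Suc n. kernel_coeff l r x * s r x)" for x
  have "vertex_distribution (s r)" if "r < Suc n" for r
    using assms that vertex_distribution_cmult[of "t (r - 1)" "- 1 / of_nat r"]
    by (auto simp: s_def kernel_repr_def vertex_distribution_zero)
  then have repr: "kernel_repr l (Suc n) s f"
    by (simp add: kernel_repr_def f_def)
  have "(\<lambda>r x. - of_nat (Suc r) * s (Suc r) x) = t"
    by (simp add: s_def fun_eq_iff del: of_nat_Suc)
  then have "kernel_repr l n t (Lop par rt q l f)"
    using kernel_repr_Suc(2)[OF repr] by simp
  with assms have "Lop par rt q l f = g"
    by (simp add: kernel_repr_def fun_eq_iff)
  with repr kernel_repr_Suc(1)[OF repr] show ?thesis
    using that by blast
qed

lemma polyharmonic_kernel_repr: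
  assumes "l \<noteq> 0" "polyharmonic par rt q l n f"
  shows "\<exists>s. kernel_repr l n s f"
  using assms(2)
proof (induction n arbitrary: f)
  case 0
  then have "f = (\<lambda>_. 0)"
    by (simp add: polyharmonic_def)
  then show ?case
    by (simp add: kernel_repr_def)
next
  case (Suc n)
  then have Qf: "Qdefined par rt q f" and "polyharmonic par rt q l n (Lop par rt q l f)"
    by (simp_all add: polyharmonic_Suc)
  with Suc.IH obtain t where "kernel_repr l n t (Lop par rt q l f)"
    by blast
  then obtain s g where g: "kernel_repr l (Suc n) s g" "Qdefined par rt q g"
    and Lg: "Lop par rt q l g = Lop par rt q l f"
    by (rule kernel_repr_Lop_preimage)
  have "Qdefined par rt q (\<lambda>x. f x - g x)" "Lop par rt q l (\<lambda>x. f x - g x) = (\<lambda>_. 0)"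
    using Qdefined_diff[OF Qf g(2)] Lop_diff[OF Qf g(2)] Lg by (simp_all add: fun_eq_iff)
  then obtain s' where "kernel_repr l (Suc n) s' (\<lambda>x. f x - g x)"
    using eigenfunction_kernel_repr[OF assms(1)] by blast
  from kernel_repr_add[OF g(1) this] show ?case
    by auto
qed

end

theorem proposition6p2:
  fixes par :: "'a::countable \<Rightarrow> 'a" and rt :: 'a and q :: "'a \<Rightarrow> 'a \<Rightarrow> real"
    and l :: complex and n :: nat
  assumes "is_rooted_tree par rt"
    and "tree_stochastic par rt q"
    and "l \<noteq> 0" and "n \<ge> 1"
  shows "(\<forall>f. polyharmonic par rt q l n f \<longrightarrow> (\<exists>\<sigma>. represents par rt q l n \<sigma> f))
       \<and> (\<forall>f \<sigma> \<sigma>'. represents par rt q l n \<sigma> f \<and> represents par rt q l n \<sigma>' f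
            \<longrightarrow> (\<forall>r<n. \<forall>x. \<sigma> r (bnd par rt x) = \<sigma>' r (bnd par rt x)))
       \<and> (\<forall>f \<sigma>. represents par rt q l n \<sigma> f \<longrightarrow> polyharmonic par rt q l n f)"
proof -
  interpret stochastic_tree par rt q
    using assms(1,2) by unfold_locales
  show ?thesis
  proof (intro conjI allI impI)
    fix f
    assume "polyharmonic par rt q l n f"
    then obtain s where "kernel_repr l n s f"
      using polyharmonic_kernel_repr[OF assms(3)] by blast
    then show "\<exists>\<sigma>. represents par rt q l n \<sigma> f"
      by (blast intro: kernel_repr_imp_represents)
  next
    fix f \<sigma> \<sigma>' r x
    assume "represents par rt q l n \<sigma> f \<and> represents par rt q l n \<sigma>' f" "r < n"
    then show "\<sigma> r (bnd par rt x) = \<sigma>' r (bnd par rt x)"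
      using kernel_repr_unique[OF assms(3)] represents_imp_kernel_repr by blast
  next
    fix f \<sigma>
    assume "represents par rt q l n \<sigma> f"
    then show "polyharmonic par rt q l n f"
      by (blast intro: kernel_repr_polyharmonic represents_imp_kernel_repr)
  qed
qed

end
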